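(* Consider the input-output system $\dot{\mathbf x}=\mathbf f(\mathbf x)+\hat{\mathbf e}_1 g(u,x_1)$, $u\in J$, satisfying assumption (A0), with output $x_j$ where $j\neq 1$, and let $G$ be its J-graph. (1) If $G$ has no input-output path, then the steady-state response $x_j^*(u)$ is independent of $u$. (2) Suppose $G$ has an input-output path. If $G$ has neither an incoherent feedforward loop from input $x_1$ to output $x_j$, nor a positive feedback loop that is vertex-disjoint from some input-output path, then the system is not quasi-adaptive and does not exhibit biphasic response.
   Context: $\mathcal X\subset\mathbb R^n$, $J\subset\mathbb R$ an interval, $\mathbf f:\mathcal X\to\mathbb R^n$ is $C^1$, every entry $\partial f_i/\partial x_k$ has constant sign (positive, negative, or identically zero) on $\mathcal X$, and $\partial f_i/\partial x_i<0$. $\hat{\mathbf e}_1$ is the first standard basis vector. The control term $g$ is one of: flow, $g(u,x_1)=u$; activation, $g(u,x_1)=(u+k_{\mathrm{on}})(x_T-x_1)-k_{\mathrm{off}}x_1$; inhibition, $g(u,x_1)=k_{\mathrm{on}}(x_T-x_1)-(u+k_{\mathrm{off}})x_1$, with constants $x_T,k_{\mathrm{on}},k_{\mathrm{off}}>0$; in the activation and inhibition cases the state space satisfies $0\le x_1\le x_T$ and every steady state has $0<x_1<x_T$. Write $\mathbf F(\mathbf x,u)=\mathbf f(\mathbf x)+\hat{\mathbf e}_1g(u,x_1)$. Assumption (A0): for every $u_0\in J$ there is $\mathbf x_0\in\mathcal X$ with $\mathbf F(\mathbf x_0,u_0)=\mathbf 0$ and $\frac{\partial\mathbf F}{\partial\mathbf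 x}(\mathbf x_0,u_0)$ of full rank; by the implicit function theorem this gives continuously differentiable steady-state curves $\mathbf x^*(u)$. The system is quasi-adaptive if, along such a curve, $\partial_u x_j^*(u_0)=0$ for some $u_0\in J$, and exhibits biphasic response if $\partial_u x_j^*(u_1)\,\partial_u x_j^*(u_2)<0$ for some $u_1,u_2\in J$. The J-graph of $\frac{\partial\mathbf f}{\partial\mathbf x}$ is the signed directed graph on nodes $x_1,\ldots,x_n$ with a positive (resp. negative) edge from $x_i$ to $x_k$ iff $\partial f_k/\partial x_i>0$ (resp. $<0$); every node has a negative self-loop. The J-graph $G$ of the input-output system is this graph together with an input edge into $x_1$ (from an external source for flow, or from an extra node $C$ representing the control, positive for activation, negative for inhibition) and an outgoing output edge from $x_j$. A path is a walk without repeated vertices except possibly first = last, in which case it is a cycle; its sign is the product of its edge signs. An input-output path is a path from $x_1$ to $x_j$. A feedback loop is a cycle of length at least two, positive if its sign is positive. An incoherent feedforward loop from $x_1$ to $x_j$ is a pair of distinct paths from $x_1$ to $x_j$ with opposite signs. *)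

theory Defs
  imports "HOL-Analysis.Analysis"
begin

datatype control = Flow | Activation | Inhibition

definition gctl :: "control \<Rightarrow> real \<Rightarrow> real \<Rightarrow> real \<Rightarrow> real \<Rightarrow> real \<Rightarrow> real" where
  "gctl c xT kon koff u x1 =
     (case c of
        Flow \<Rightarrow> u
      | Activation \<Rightarrow> (u + kon) * (xT - x1) - koff * x1
      | Inhibition \<Rightarrow> kon * (xT - x1) - (u + koff) * x1)"

definition dgctl_dx1 :: "control \<Rightarrow> real \<Rightarrow> real \<Rightarrow> real \<Rightarrow> real \<Rightarrow> real" where
  "dgctl_dx1 c xT kon koff u =
     (case c of
        Flow \<Rightarrow> 0
      | Activation \<Rightarrow> - (u + kon) - koff
      | Inhibition \<Rightarrow> - kon - (u + koff))"

text \<open>Vector field F(x,u) = f(x) + e_1 g(u, x_1); the index i1 plays the role of coordinate 1.\<close>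
definition Fsys :: "(real^'n \<Rightarrow> real^'n) \<Rightarrow> control \<Rightarrow> real \<Rightarrow> real \<Rightarrow> real \<Rightarrow> 'n
                    \<Rightarrow> real^'n \<Rightarrow> real \<Rightarrow> real^'n" where
  "Fsys f c xT kon koff i1 x u = f x + axis i1 (gctl c xT kon koff u (x $ i1))"

text \<open>Jacobian dF/dx(x,u) = Df(x) + e_1 e_1^T dg/dx1. Rows are components: (M $ i $ k) = dF_i/dx_k.\<close>
definition DFsys :: "(real^'n \<Rightarrow> real^'n^'n) \<Rightarrow> control \<Rightarrow> real \<Rightarrow> real \<Rightarrow> real \<Rightarrow> 'n
                    \<Rightarrow> real^'n \<Rightarrow> real \<Rightarrow> real^'n^'n" where
  "DFsys Df c xT kon koff i1 x u =
     Df x + (\<chi> i k. if i = i1 \<and> k = i1 then dgctl_dx1 c xT kon koff u else 0)"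

text \<open>Sign of the J-graph edge from node a to node b: sign of df_b/dx_a (constant on X by assumption).\<close>
definition edge_sign :: "(real^'n \<Rightarrow> real^'n^'n) \<Rightarrow> (real^'n) set \<Rightarrow> 'n \<Rightarrow> 'n \<Rightarrow> real" where
  "edge_sign Df X a b =
     (if \<exists>x\<in>X. Df x $ b $ a > 0 then 1
      else if \<exists>x\<in>X. Df x $ b $ a < 0 then -1 else 0)"

definition edges_present :: "('n \<Rightarrow> 'n \<Rightarrow> real) \<Rightarrow> 'n list \<Rightarrow> bool" where
  "edges_present E vs = (\<forall>i. Suc i < length vs \<longrightarrow> E (vs ! i) (vs ! Suc i) \<noteq> 0)"

definition walk_sign :: "('n \<Rightarrow> 'n \<Rightarrow> real) \<Rightarrow> 'n list \<Rightarrow> real" where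
  "walk_sign E vs = prod_list (map (\<lambda>(a, b). E a b) (zip vs (tl vs)))"

definition is_path :: "('n \<Rightarrow> 'n \<Rightarrow> real) \<Rightarrow> 'n \<Rightarrow> 'n \<Rightarrow> 'n list \<Rightarrow> bool" where
  "is_path E a b vs = (vs \<noteq> [] \<and> hd vs = a \<and> last vs = b \<and> distinct vs \<and> edges_present E vs)"

definition path_sign :: "('n \<Rightarrow> 'n \<Rightarrow> real) \<Rightarrow> 'n list \<Rightarrow> real" where
  "path_sign E vs = walk_sign E vs"

definition is_feedback_loop :: "('n \<Rightarrow> 'n \<Rightarrow> real) \<Rightarrow> 'n list \<Rightarrow> bool" where
  "is_feedback_loop E vs = (length vs \<ge> 2 \<and> distinct vs \<and> edges_present E vs
                            \<and> E (last vs) (hd vs) \<noteq> 0)"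

definition cycle_sign :: "('n \<Rightarrow> 'n \<Rightarrow> real) \<Rightarrow> 'n list \<Rightarrow> real" where
  "cycle_sign E vs = walk_sign E vs * E (last vs) (hd vs)"

definition has_io_path :: "('n \<Rightarrow> 'n \<Rightarrow> real) \<Rightarrow> 'n \<Rightarrow> 'n \<Rightarrow> bool" where
  "has_io_path E a b = (\<exists>p. is_path E a b p)"

definition has_IFFL :: "('n \<Rightarrow> 'n \<Rightarrow> real) \<Rightarrow> 'n \<Rightarrow> 'n \<Rightarrow> bool" where
  "has_IFFL E a b = (\<exists>p q. is_path E a b p \<and> is_path E a b q \<and> p \<noteq> q
                          \<and> path_sign E p = - path_sign E q)"

definition has_pos_loop_disjoint_from_io_path :: "('n \<Rightarrow> 'n \<Rightarrow> real) \<Rightarrow> 'n \<Rightarrow> 'n \<Rightarrow> bool" where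
  "has_pos_loop_disjoint_from_io_path E a b =
     (\<exists>c p. is_feedback_loop E c \<and> cycle_sign E c > 0 \<and> is_path E a b p \<and> set c \<inter> set p = {})"

definition ss_curve :: "(real^'n \<Rightarrow> real \<Rightarrow> real^'n) \<Rightarrow> (real^'n \<Rightarrow> real \<Rightarrow> real^'n^'n)
                        \<Rightarrow> (real^'n) set \<Rightarrow> real set \<Rightarrow> (real \<Rightarrow> real^'n) \<Rightarrow> (real \<Rightarrow> real^'n) \<Rightarrow> bool" where
  "ss_curve F DF X I xs xs' =
     (is_interval I \<and> (\<exists>a\<in>I. \<exists>b\<in>I. a < b) \<and>
      (\<forall>u\<in>I. xs u \<in> X \<and> F (xs u) u = 0 \<and> rank (DF (xs u) u) = CARD('n)
               \<and> (xs has_vector_derivative xs' u) (at u within I)) \<and>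
      continuous_on I xs')"

definition quasi_adaptive_on :: "real set \<Rightarrow> (real \<Rightarrow> real^'n) \<Rightarrow> 'n \<Rightarrow> bool" where
  "quasi_adaptive_on I xs' j = (\<exists>u0\<in>I. xs' u0 $ j = 0)"

definition biphasic_on :: "real set \<Rightarrow> (real \<Rightarrow> real^'n) \<Rightarrow> 'n \<Rightarrow> bool" where
  "biphasic_on I xs' j = (\<exists>u1\<in>I. \<exists>u2\<in>I. xs' u1 $ j * xs' u2 $ j < 0)"

end

theory Submission
  imports Defs "HOL-Combinatorics.Cycles" "HOL-Combinatorics.Orbits"
begin

text \<open>
  Along a steady-state curve, differentiating \<open>F(x*(u), u) = 0\<close> gives
  \<open>DF \<cdot> x*' = -(\<partial>g/\<partial>u) e\<^sub>1\<close>, so by Cramer's rule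
  \<open>x\<^sub>j*' \<cdot> det DF = -(\<partial>g/\<partial>u) \<cdot> C\<^sub>1\<^sub>j\<close> with \<open>C\<^sub>1\<^sub>j\<close> a cofactor of the Jacobian.
  Expand \<open>C\<^sub>1\<^sub>j\<close> over the permutations \<open>p\<close> with \<open>p j = 1\<close>: the cycle of \<open>p\<close> through
  \<open>1\<close> is an input-output path of the J-graph (or the term vanishes), and every other
  cycle is a feedback loop or a diagonal entry.  Without input-output paths every term
  vanishes, so \<open>x\<^sub>j*\<close> is constant.  Without incoherent feedforward loops all paths have
  the same sign, and without positive loops disjoint from a path every cycle off the
  path has nonpositive weight; then all terms have one sign and the term of the cycle
  along a path is nonzero.  So \<open>x\<^sub>j*'\<close> never vanishes and, being continuous on an
  interval, never changes sign.
\<close>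

section \<open>Lists and permutations\<close>

lemma sign_cycle_of_list:
  "distinct cs \<Longrightarrow> sign (cycle_of_list cs) = (-1) ^ (length cs - 1)"
proof (induction cs rule: cycle_of_list.induct)
  case (1 i j cs)
  have "sign (cycle_of_list (i # j # cs))
      = sign (Transposition.transpose i j) * sign (cycle_of_list (j # cs))"
    by (simp add: sign_compose permutation_swap_id permutation_of_cycle)
  also have "\<dots> = - ((-1) ^ (length cs))" using 1 by (simp add: sign_swap_id)
  finally show ?case by (simp del: cycle_of_list.simps)
qed auto

lemma cycle_of_list_nth:
  assumes "distinct cs" and "m < length cs"
  shows "cycle_of_list cs (cs ! m) = cs ! (Suc m mod length cs)"
proof -
  have "map (cycle_of_list cs) cs = rotate1 cs" using cyclic_rotation[OF assms(1), of 1] by simp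
  then have "cycle_of_list cs (cs ! m) = rotate1 cs ! m" using assms(2) by (metis nth_map)
  then show ?thesis using nth_rotate1[OF assms(2)] by simp
qed

lemma prod_sgn: "(\<Prod>x\<in>S. sgn (f x)) = sgn (\<Prod>x\<in>S. f x :: 'b :: linordered_idom)"
  by (induction S rule: infinite_finite_induct) (auto simp: sgn_mult)

lemma zip_tl_eq_map_butlast:
  assumes "\<And>m. Suc m < length cs \<Longrightarrow> cs ! Suc m = p (cs ! m)"
  shows "zip cs (tl cs) = map (\<lambda>x. (x, p x)) (butlast cs)"
  by (rule nth_equalityI) (auto simp: assms nth_tl nth_butlast)

lemma set_butlast_conv_nth: "set (butlast xs) = (\<lambda>m. xs ! m) ` {m. Suc m < length xs}"
proof -
  have "set (butlast xs) = (\<lambda>m. butlast xs ! m) ` {m. m < length (butlast xs)}"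
    by (auto simp: set_conv_nth)
  also have "\<dots> = (\<lambda>m. xs ! m) ` {m. Suc m < length xs}"
    by (rule image_cong) (auto simp: nth_butlast)
  finally show ?thesis .
qed

lemma set_butlast_distinct: "distinct xs \<Longrightarrow> set (butlast xs) = set xs - {last xs}"
  by (cases xs rule: rev_cases) auto

text \<open>
  \<^term>\<open>support p s\<close> lists the cycle of \<open>p\<close> through \<open>s\<close>, starting at \<open>s\<close>.  Being an
  abbreviation for a \<open>map\<close> over \<open>upt\<close>, it is easily mangled (or looped on) by the
  simplifier, so proofs go through the facts below instead.
\<close>

lemma
  assumes "permutation p"
  shows support_ne_Nil: "support p s \<noteq> []"
    and hd_support: "hd (support p s) = s"
    and last_support: "p (last (support p s)) = s"
    and length_support_eq_1_iff: "length (support p s) = 1 \<longleftrightarrow> p s = s"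
proof -
  note period = least_power_of_permutation[OF assms, of s]
  show ne: "support p s \<noteq> []" using period(2) by simp
  show "hd (support p s) = s" using period(2) by (simp add: hd_map)
  have "last (support p s) = (p ^^ (least_power p s - 1)) s"
    using ne by (simp add: last_map del: upt.simps)
  then have "p (last (support p s)) = (p ^^ Suc (least_power p s - 1)) s"
    by simp
  then show "p (last (support p s)) = s"
    using period by simp
  show "length (support p s) = 1 \<longleftrightarrow> p s = s"
  proof
    assume "length (support p s) = 1"
    then show "p s = s" using period(1) by simp
  next
    assume "p s = s"
    then show "length (support p s) = 1"
      using period(2) least_power_le[of 1 p s] by simp
  qed
qed

lemma self_in_support: "permutation p \<Longrightarrow> s \<in> set (support p s)"
  using hd_in_set[OF support_ne_Nil] hd_support by metis

lemma last_support_eq: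
  assumes p: "permutation p" and pk: "p k = s"
  shows "last (support p s) = k"
proof -
  have "inj p" using p by (simp add: permutation bij_is_inj)
  then show ?thesis using last_support[OF p, of s] pk by (metis injD)
qed

lemma in_support_if_apply: "permutation p \<Longrightarrow> p k = s \<Longrightarrow> k \<in> set (support p s)"
  using last_in_set[OF support_ne_Nil] last_support_eq by metis

lemma
  assumes pB: "p permutes B" and fin: "finite B" and s: "s \<in> B"
  defines "C \<equiv> set (support p s)"
  shows support_subset: "C \<subseteq> B"
    and permutes_restrict_support: "perm_restrict p (B - C) permutes (B - C)"
    and sign_restrict_support:
      "sign p = (-1) ^ (length (support p s) - 1) * sign (perm_restrict p (B - C))"
proof -
  have perm: "permutation p" using permutes_imp_permutation[OF fin pB] .
  have C_orbit: "C = orbit p s"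
    unfolding C_def support_set[OF perm] orbit_altdef_permutation[OF perm] by auto
  have cyc: "cyclic_on p C" unfolding C_orbit using cyclic_on_orbit[OF pB fin] .
  show CB: "C \<subseteq> B" unfolding C_orbit using permutes_orbit_subset[OF pB s] .
  show restr: "perm_restrict p (B - C) permutes (B - C)"
    using perm_restrict_diff_cyclic[OF pB cyc] .
  have "perm_restrict p C = cycle_of_list (support p s)"
  proof
    fix x show "perm_restrict p C x = cycle_of_list (support p s) x"
      by (cases "x \<in> C")
        (auto simp: C_def perm_restrict_def cycle_restrict[OF perm] id_outside_supp)
  qed
  moreover have "p = perm_restrict p (B - C) \<circ> perm_restrict p C"
  proof -
    have "perm_restrict p (B - C) \<circ> perm_restrict p C = perm_restrict p ((B - C) \<union> C)"
      by (rule perm_restrict_comp[OF _ cyc]) auto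
    also have "(B - C) \<union> C = B" using CB by auto
    finally show ?thesis using perm_restrict_id[OF pB] by (simp add: comp_def)
  qed
  ultimately have "sign p = sign (perm_restrict p (B - C)) * sign (cycle_of_list (support p s))"
    using sign_compose permutation_of_cycle restr fin
    by (metis finite_Diff permutation_permutes)
  then show "sign p = (-1) ^ (length (support p s) - 1) * sign (perm_restrict p (B - C))"
    using sign_cycle_of_list[OF cycle_of_permutation[OF perm]] by simp
qed

lemma det_term_split_support:
  fixes g :: "'a \<Rightarrow> 'a \<Rightarrow> real"
  assumes pB: "p permutes B" and fin: "finite B" and s: "s \<in> B"
  defines "C \<equiv> set (support p s)"
  defines "p' \<equiv> perm_restrict p (B - C)"
  shows "(-1) ^ card B * (of_int (sign p) * (\<Prod>i\<in>B. g (p i) i))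
    = - (\<Prod>i\<in>C. g (p i) i)
      * ((-1) ^ card (B - C) * (of_int (sign p') * (\<Prod>i\<in>B - C. g (p' i) i)))"
proof -
  have p: "permutation p" using permutes_imp_permutation[OF fin pB] .
  have CB: "C \<subseteq> B" unfolding C_def using support_subset[OF pB fin s] .
  have "(\<Prod>i\<in>B. g (p i) i) = (\<Prod>i\<in>C. g (p i) i) * (\<Prod>i\<in>B - C. g (p i) i)"
    using prod.subset_diff[OF CB fin] by (simp add: mult.commute)
  also have "(\<Prod>i\<in>B - C. g (p i) i) = (\<Prod>i\<in>B - C. g (p' i) i)"
    by (rule prod.cong) (auto simp: p'_def perm_restrict_def)
  finally have prod_split:
    "(\<Prod>i\<in>B. g (p i) i) = (\<Prod>i\<in>C. g (p i) i) * (\<Prod>i\<in>B - C. g (p' i) i)" .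
  obtain m where m: "length (support p s) = Suc m"
    using support_ne_Nil[OF p] by (metis length_0_conv not0_implies_Suc)
  have "card C = Suc m"
    unfolding C_def m[symmetric] by (rule distinct_card[OF cycle_of_permutation[OF p]])
  then have card: "card B = card (B - C) + Suc m"
    using card_Diff_subset[OF finite_subset[OF CB fin] CB] card_mono[OF fin CB] by simp
  have sign: "of_int (sign p) = (-1::real) ^ m * of_int (sign p')"
    using sign_restrict_support[OF pB fin s] unfolding C_def[symmetric] p'_def[symmetric] m
    by simp
  have "(-1) ^ card B * (of_int (sign p) * (\<Prod>i\<in>B. g (p i) i))
      = ((-1) ^ m * (-1) ^ m) * - (\<Prod>i\<in>C. g (p i) i)
        * ((-1) ^ card (B - C) * (of_int (sign p') * (\<Prod>i\<in>B - C. g (p' i) i)))"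
    unfolding card sign prod_split by (simp add: power_add algebra_simps)
  also have "(-1::real) ^ m * (-1) ^ m = 1" by (simp flip: power_mult_distrib)
  finally show ?thesis by simp
qed

section \<open>The signed graph of a matrix\<close>

definition sign_pattern :: "('n \<Rightarrow> 'n \<Rightarrow> real) \<Rightarrow> real^'n^'n \<Rightarrow> bool" where
  "sign_pattern E A \<longleftrightarrow> (\<forall>a b. a \<noteq> b \<longrightarrow> E a b = sgn (A $ b $ a))"

lemma
  assumes E: "sign_pattern E A" and dist: "distinct cs"
    and succ: "\<And>m. Suc m < length cs \<Longrightarrow> cs ! Suc m = p (cs ! m)"
  shows walk_sign_successor_list:
      "walk_sign E cs = sgn (\<Prod>x\<in>set (butlast cs). A $ p x $ x)"
    and edges_present_successor_list:
      "edges_present E cs \<longleftrightarrow> (\<forall>x\<in>set (butlast cs). A $ p x $ x \<noteq> 0)"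
proof -
  have E_succ: "E x (p x) = sgn (A $ p x $ x)" if x: "x \<in> set (butlast cs)" for x
  proof -
    obtain m where m: "m < length (butlast cs)" "x = butlast cs ! m"
      using x by (auto simp: in_set_conv_nth)
    then have m: "Suc m < length cs" "x = cs ! m" by (auto simp: nth_butlast)
    moreover have "cs ! Suc m \<noteq> cs ! m" using dist m(1) by (simp add: nth_eq_iff_index_eq)
    ultimately have "p x \<noteq> x" using succ by simp
    then show ?thesis using E by (simp add: sign_pattern_def)
  qed
  have "walk_sign E cs = (\<Prod>x\<in>set (butlast cs). E x (p x))"
    using zip_tl_eq_map_butlast[OF succ]
    by (simp add: walk_sign_def prod.distinct_set_conv_list dist distinct_butlast comp_def)
  also have "\<dots> = sgn (\<Prod>x\<in>set (butlast cs). A $ p x $ x)"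
    by (simp add: E_succ prod_sgn[symmetric])
  finally show "walk_sign E cs = sgn (\<Prod>x\<in>set (butlast cs). A $ p x $ x)" .
  have "edges_present E cs \<longleftrightarrow> (\<forall>m. Suc m < length cs \<longrightarrow> E (cs ! m) (p (cs ! m)) \<noteq> 0)"
    by (simp add: edges_present_def succ)
  also have "\<dots> \<longleftrightarrow> (\<forall>x\<in>set (butlast cs). E x (p x) \<noteq> 0)"
    using set_butlast_conv_nth[of cs] by auto
  also have "\<dots> \<longleftrightarrow> (\<forall>x\<in>set (butlast cs). A $ p x $ x \<noteq> 0)"
    by (rule ball_cong) (simp_all add: E_succ sgn_zero_iff)
  finally show "edges_present E cs \<longleftrightarrow> (\<forall>x\<in>set (butlast cs). A $ p x $ x \<noteq> 0)" .
qed

lemma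
  assumes E: "sign_pattern E A" and p: "permutation p" and ps: "p s \<noteq> s"
  shows is_feedback_loop_support:
      "is_feedback_loop E (support p s) \<longleftrightarrow> (\<forall>x\<in>set (support p s). A $ p x $ x \<noteq> 0)"
    and cycle_sign_support:
      "cycle_sign E (support p s) = sgn (\<Prod>x\<in>set (support p s). A $ p x $ x)"
proof -
  define cs where "cs = support p s"
  have dist: "distinct cs" unfolding cs_def using cycle_of_permutation[OF p] .
  have len: "length cs \<ge> 2" unfolding cs_def using least_power_gt_one[OF p ps] by simp
  have succ: "\<And>m. Suc m < length cs \<Longrightarrow> cs ! Suc m = p (cs ! m)" unfolding cs_def by simp
  have hd: "hd cs = s" and p_last: "p (last cs) = s"
    unfolding cs_def using hd_support[OF p] last_support[OF p] .
  have ne: "cs \<noteq> []" using len by auto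
  then have "last cs \<noteq> hd cs"
    using dist len by (simp add: hd_conv_nth last_conv_nth nth_eq_iff_index_eq)
  then have E_last: "E (last cs) (hd cs) = sgn (A $ p (last cs) $ last cs)"
    using E p_last hd by (simp add: sign_pattern_def)
  have "set cs = set (butlast cs @ [last cs])" using ne by simp
  then have set_cs: "set cs = insert (last cs) (set (butlast cs))" by simp
  have last_notin: "last cs \<notin> set (butlast cs)" using set_butlast_distinct[OF dist] by simp
  show "is_feedback_loop E (support p s) \<longleftrightarrow> (\<forall>x\<in>set (support p s). A $ p x $ x \<noteq> 0)"
    using edges_present_successor_list[OF E dist succ] E_last set_cs len dist
    by (auto simp: is_feedback_loop_def cs_def[symmetric] sgn_zero_iff)
  have "cycle_sign E cs
      = sgn (\<Prod>x\<in>set (butlast cs). A $ p x $ x) * sgn (A $ p (last cs) $ last cs)"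
    using walk_sign_successor_list[OF E dist succ] E_last by (simp add: cycle_sign_def)
  also have "\<dots> = sgn (\<Prod>x\<in>set cs. A $ p x $ x)"
    unfolding set_cs using last_notin by (simp add: sgn_mult mult.commute)
  finally show "cycle_sign E (support p s) = sgn (\<Prod>x\<in>set (support p s). A $ p x $ x)"
    unfolding cs_def .
qed

lemma
  assumes E: "sign_pattern E A" and p: "permutation p" and pk: "p k = i" and ki: "k \<noteq> i"
  shows is_path_support:
      "is_path E i k (support p i) \<longleftrightarrow> (\<forall>x\<in>set (support p i) - {k}. A $ p x $ x \<noteq> 0)"
    and path_sign_support:
      "path_sign E (support p i) = sgn (\<Prod>x\<in>set (support p i) - {k}. A $ p x $ x)"
proof -
  define cs where "cs = support p i"
  have dist: "distinct cs" unfolding cs_def using cycle_of_permutation[OF p] .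
  have succ: "\<And>m. Suc m < length cs \<Longrightarrow> cs ! Suc m = p (cs ! m)" unfolding cs_def by simp
  have last: "last cs = k" unfolding cs_def using last_support_eq[OF p pk] .
  have set_butlast: "set (butlast cs) = set cs - {k}"
    using set_butlast_distinct[OF dist] last by simp
  show "is_path E i k (support p i) \<longleftrightarrow> (\<forall>x\<in>set (support p i) - {k}. A $ p x $ x \<noteq> 0)"
    using edges_present_successor_list[OF E dist succ] support_ne_Nil[OF p] hd_support[OF p]
      last dist set_butlast
    by (simp add: is_path_def cs_def)
  show "path_sign E (support p i) = sgn (\<Prod>x\<in>set (support p i) - {k}. A $ p x $ x)"
    using walk_sign_successor_list[OF E dist succ] set_butlast
    by (simp add: path_sign_def cs_def)
qed

lemma
  assumes E: "sign_pattern E A" and P: "is_path E i k P"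
  shows path_sign_cycle_of_list:
      "path_sign E P = sgn (\<Prod>x\<in>set P - {k}. A $ cycle_of_list P x $ x)"
    and cycle_of_list_path_weights: "\<forall>x\<in>set P - {k}. A $ cycle_of_list P x $ x \<noteq> 0"
proof -
  have dist: "distinct P" and last: "last P = k" using P by (auto simp: is_path_def)
  have succ: "P ! Suc m = cycle_of_list P (P ! m)" if "Suc m < length P" for m
    using cycle_of_list_nth[OF dist, of m] that by simp
  have set_butlast: "set (butlast P) = set P - {k}"
    using set_butlast_distinct[OF dist] last by simp
  show "path_sign E P = sgn (\<Prod>x\<in>set P - {k}. A $ cycle_of_list P x $ x)"
    using walk_sign_successor_list[OF E dist succ] set_butlast by (simp add: path_sign_def)
  show "\<forall>x\<in>set P - {k}. A $ cycle_of_list P x $ x \<noteq> 0"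
    using edges_present_successor_list[OF E dist succ] set_butlast P by (simp add: is_path_def)
qed

lemma abs_path_sign:
  assumes "sign_pattern E A" and "is_path E i k P"
  shows "\<bar>path_sign E P\<bar> = 1"
  using path_sign_cycle_of_list[OF assms] cycle_of_list_path_weights[OF assms]
  by (simp add: abs_sgn prod_zero_iff)

lemma path_sign_coherent:
  assumes E: "sign_pattern E A" and no_iffl: "\<not> has_IFFL E i k"
    and P: "is_path E i k P" and Q: "is_path E i k Q"
  shows "path_sign E Q = path_sign E P"
proof (rule ccontr)
  assume ne: "path_sign E Q \<noteq> path_sign E P"
  then have "path_sign E Q = - path_sign E P"
    using abs_path_sign[OF E Q] abs_path_sign[OF E P] by (auto simp: abs_if split: if_splits)
  moreover have "Q \<noteq> P" using ne by auto
  ultimately show False using no_iffl Q P unfolding has_IFFL_def by blast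
qed

lemma support_weight_nonpos:
  assumes E: "sign_pattern E A" and p: "permutation p"
    and fixed: "p s = s \<Longrightarrow> A $ s $ s < 0"
    and loop: "is_feedback_loop E (support p s) \<Longrightarrow> cycle_sign E (support p s) \<le> 0"
  shows "(\<Prod>x\<in>set (support p s). A $ p x $ x) \<le> 0"
proof (cases "p s = s")
  case True
  define cs where "cs = support p s"
  have "length cs = 1" "hd cs = s"
    unfolding cs_def using length_support_eq_1_iff[OF p] hd_support[OF p] True by auto
  then have "set cs = {s}" by (cases cs) auto
  then show ?thesis using True fixed by (simp add: cs_def[symmetric])
next
  case False
  show ?thesis
  proof (rule ccontr)
    assume pos: "\<not> (\<Prod>x\<in>set (support p s). A $ p x $ x) \<le> 0"
    then have "(\<Prod>x\<in>set (support p s). A $ p x $ x) \<noteq> 0" by linarith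
    then have "\<forall>x\<in>set (support p s). A $ p x $ x \<noteq> 0"
      using prod_zero_iff[OF finite_set, of "\<lambda>x. A $ p x $ x" "support p s"] by blast
    then show False
      using loop is_feedback_loop_support[OF E p False] cycle_sign_support[OF E p False] pos
      by (simp add: sgn_if)
  qed
qed

lemma det_term_sign:
  fixes A :: "real^'n^'n"
  assumes E: "sign_pattern E A"
  shows "p permutes B \<Longrightarrow> \<forall>i\<in>B. A $ i $ i < 0
    \<Longrightarrow> \<forall>c. is_feedback_loop E c \<and> set c \<subseteq> B \<longrightarrow> cycle_sign E c \<le> 0
    \<Longrightarrow> 0 \<le> (-1) ^ card B * (of_int (sign p) * (\<Prod>i\<in>B. A $ p i $ i))"
proof (induction B arbitrary: p rule: finite_psubset_induct[OF finite])
  case (1 B)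
  show ?case
  proof (cases "B = {}")
    case True
    then show ?thesis using "1.prems"(1) by (simp add: permutes_empty)
  next
    case False
    then obtain s where s: "s \<in> B" by blast
    have p: "permutation p" using permutes_imp_permutation[OF finite "1.prems"(1)] .
    define C where "C = set (support p s)"
    define p' where "p' = perm_restrict p (B - C)"
    have CB: "C \<subseteq> B" unfolding C_def using support_subset[OF "1.prems"(1) finite s] .
    have "B - C \<subset> B" using s self_in_support[OF p] unfolding C_def by blast
    moreover have "p' permutes (B - C)"
      unfolding p'_def C_def using permutes_restrict_support[OF "1.prems"(1) finite s] .
    moreover have "\<forall>i\<in>B - C. A $ i $ i < 0" using "1.prems"(2) by blast
    moreover have "\<forall>c. is_feedback_loop E c \<and> set c \<subseteq> B - C \<longrightarrow> cycle_sign E c \<le> 0"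
      using "1.prems"(3) by blast
    ultimately have rest:
      "0 \<le> (-1) ^ card (B - C) * (of_int (sign p') * (\<Prod>i\<in>B - C. A $ p' i $ i))"
      by (rule "1.IH")
    have "p s = s \<Longrightarrow> A $ s $ s < 0" using "1.prems"(2) s by blast
    moreover have "is_feedback_loop E (support p s) \<Longrightarrow> cycle_sign E (support p s) \<le> 0"
      using "1.prems"(3) CB unfolding C_def by blast
    ultimately have cycle: "(\<Prod>i\<in>C. A $ p i $ i) \<le> 0"
      unfolding C_def by (rule support_weight_nonpos[OF E p])
    show ?thesis
      unfolding det_term_split_support[OF "1.prems"(1) finite s, of "\<lambda>a b. A $ a $ b"]
      using cycle rest unfolding C_def[symmetric] p'_def[symmetric]
      by (simp add: mult_nonpos_nonneg)
  qed
qed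

section \<open>Cofactors\<close>

definition cofactor :: "real^'n^'n \<Rightarrow> 'n \<Rightarrow> 'n \<Rightarrow> real" where
  "cofactor A i k =
     (\<Sum>p | p permutes (UNIV :: 'n set) \<and> p k = i.
        of_int (sign p) * (\<Prod>l\<in>UNIV - {k}. A $ p l $ l))"

lemma det_replace_column_axis:
  fixes A :: "real^'n^'n"
  shows "det (\<chi> r l. if l = k then axis i \<beta> $ r else A $ r $ l) = \<beta> * cofactor A i k"
proof -
  define B where "B = (\<chi> r l. if l = k then axis i \<beta> $ r else A $ r $ l)"
  have expand_term: "of_int (sign p) * (\<Prod>l\<in>UNIV. B $ p l $ l)
      = \<beta> * (if p k = i then of_int (sign p) * (\<Prod>l\<in>UNIV - {k}. A $ p l $ l) else 0)" for p
  proof -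
    have "(\<Prod>l\<in>UNIV. B $ p l $ l) = B $ p k $ k * (\<Prod>l\<in>UNIV - {k}. B $ p l $ l)"
      by (rule prod.remove) simp_all
    also have "(\<Prod>l\<in>UNIV - {k}. B $ p l $ l) = (\<Prod>l\<in>UNIV - {k}. A $ p l $ l)"
      by (rule prod.cong) (auto simp: B_def)
    finally show ?thesis by (simp add: B_def axis_def)
  qed
  have "det B = det (transpose B)" by simp
  also have "\<dots> = (\<Sum>p | p permutes (UNIV :: 'n set). of_int (sign p) * (\<Prod>l\<in>UNIV. B $ p l $ l))"
    unfolding det_def transpose_def by simp
  also have "\<dots> = \<beta> * (\<Sum>p | p permutes (UNIV :: 'n set).
      if p k = i then of_int (sign p) * (\<Prod>l\<in>UNIV - {k}. A $ p l $ l) else 0)"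
    by (simp add: expand_term sum_distrib_left)
  also have "\<dots> = \<beta> * cofactor A i k"
    unfolding cofactor_def
    by (simp add: sum.inter_filter[OF finite_permutations, symmetric] conj_commute)
  finally show ?thesis unfolding B_def .
qed

lemma cofactor_term_eq_0_unless_path:
  assumes E: "sign_pattern E A" and p: "permutation p" and pk: "p k = i" and ki: "k \<noteq> i"
    and no_path: "\<not> is_path E i k (support p i)"
  shows "(\<Prod>l\<in>UNIV - {k}. A $ p l $ l) = 0"
proof -
  obtain x where "x \<in> set (support p i) - {k}" "A $ p x $ x = 0"
    using is_path_support[OF E p pk ki] no_path by blast
  then show ?thesis by (intro prod_zero) auto
qed

lemma cofactor_term_sign:
  fixes A :: "real^'n^'n"
  assumes E: "sign_pattern E A" and p: "p permutes UNIV" and pk: "p k = i" and ki: "k \<noteq> i"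
    and diag: "\<forall>l. l \<noteq> i \<longrightarrow> A $ l $ l < 0"
    and no_pos: "\<forall>c. is_feedback_loop E c \<and> set c \<inter> set (support p i) = {}
                     \<longrightarrow> cycle_sign E c \<le> 0"
  shows "0 \<le> (-1) ^ (CARD('n) - 1) * path_sign E (support p i)
              * (of_int (sign p) * (\<Prod>l\<in>UNIV - {k}. A $ p l $ l))"
proof -
  have perm: "permutation p" using permutes_imp_permutation[OF finite p] .
  define C where "C = set (support p i)"
  define p' where "p' = perm_restrict p (UNIV - C)"
  define Q where "Q = (\<Prod>l\<in>C - {k}. A $ p l $ l)"
  define R where "R = (-1) ^ card (UNIV - C) * (of_int (sign p') * (\<Prod>l\<in>UNIV - C. A $ p' l $ l))"
  have kC: "k \<in> C" and iC: "i \<in> C"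
    unfolding C_def using in_support_if_apply[OF perm pk] self_in_support[OF perm] .
  have "p' permutes (UNIV - C)"
    unfolding p'_def C_def using permutes_restrict_support[OF p finite UNIV_I] .
  moreover have "\<forall>l\<in>UNIV - C. A $ l $ l < 0" using diag iC by (metis DiffD2)
  moreover have "\<forall>c. is_feedback_loop E c \<and> set c \<subseteq> UNIV - C \<longrightarrow> cycle_sign E c \<le> 0"
    using no_pos unfolding C_def by blast
  ultimately have "0 \<le> R" unfolding R_def by (rule det_term_sign[OF E])
  \<comment> \<open>Replacing column k by a unit column turns the cofactor term into a determinant term.\<close>
  define g where "g a b = (if b = k then 1 else A $ a $ b)" for a b
  have "(\<Prod>l\<in>UNIV. g (p l) l) = (\<Prod>l\<in>UNIV - {k}. A $ p l $ l)"
    by (simp add: prod.remove[of UNIV k] g_def)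
  moreover have "(\<Prod>l\<in>C. g (p l) l) = Q"
    by (simp add: prod.remove[OF finite kC] g_def Q_def)
  moreover have "(\<Prod>l\<in>UNIV - C. g (p' l) l) = (\<Prod>l\<in>UNIV - C. A $ p' l $ l)"
    using kC by (intro prod.cong) (auto simp: g_def)
  ultimately have split: "(-1) ^ CARD('n) * (of_int (sign p) * (\<Prod>l\<in>UNIV - {k}. A $ p l $ l))
      = - Q * R"
    using det_term_split_support[OF p finite UNIV_I[of i], of g]
    unfolding C_def[symmetric] p'_def[symmetric] R_def by simp
  have path: "path_sign E (support p i) = sgn Q"
    unfolding Q_def C_def using path_sign_support[OF E perm pk ki] .
  obtain n where n: "CARD('n) = Suc n" using zero_less_card_finite not0_implies_Suc by blast
  have "(-1) ^ (CARD('n) - 1) * path_sign E (support p i)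
        * (of_int (sign p) * (\<Prod>l\<in>UNIV - {k}. A $ p l $ l))
      = - sgn Q * ((-1) ^ CARD('n) * (of_int (sign p) * (\<Prod>l\<in>UNIV - {k}. A $ p l $ l)))"
    unfolding path n by simp
  also have "\<dots> = \<bar>Q\<bar> * R"
    unfolding split by (simp add: abs_if sgn_if)
  finally show ?thesis using \<open>0 \<le> R\<close> by simp
qed

lemma cofactor_eq_0_if_no_io_path:
  assumes E: "sign_pattern E A" and ki: "k \<noteq> i" and no_path: "\<not> has_io_path E i k"
  shows "cofactor A i k = 0"
  unfolding cofactor_def
proof (rule sum.neutral, intro ballI)
  fix p assume "p \<in> {p. p permutes UNIV \<and> p k = i}"
  then have p: "permutation p" and pk: "p k = i"
    using permutes_imp_permutation[OF finite] by auto
  have "\<not> is_path E i k (support p i)" using no_path unfolding has_io_path_def by blast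
  then show "of_int (sign p) * (\<Prod>l\<in>UNIV - {k}. A $ p l $ l) = 0"
    using cofactor_term_eq_0_unless_path[OF E p pk ki] by simp
qed

lemma cycle_of_list_cofactor_term:
  fixes A :: "real^'n^'n"
  assumes E: "sign_pattern E A" and P: "is_path E i k P"
    and diag: "\<forall>l. l \<noteq> i \<longrightarrow> A $ l $ l < 0"
  shows "cycle_of_list P permutes UNIV" and "cycle_of_list P k = i"
    and "(\<Prod>l\<in>UNIV - {k}. A $ cycle_of_list P l $ l) \<noteq> 0"
proof -
  have dist: "distinct P" and ne: "P \<noteq> []" and hd: "hd P = i" and last: "last P = k"
    using P by (auto simp: is_path_def)
  show "cycle_of_list P permutes UNIV" by (rule permutes_subset[OF cycle_permutes]) simp
  show "cycle_of_list P k = i"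
    using cycle_of_list_nth[OF dist, of "length P - 1"] ne hd last
    by (simp add: last_conv_nth hd_conv_nth)
  have "A $ cycle_of_list P l $ l \<noteq> 0" if "l \<noteq> k" for l
  proof (cases "l \<in> set P")
    case True
    then show ?thesis using cycle_of_list_path_weights[OF E P] that by blast
  next
    case False
    then have "cycle_of_list P l = l" and "l \<noteq> i" using hd ne by (auto simp: id_outside_supp)
    then show ?thesis using diag by (metis less_irrefl)
  qed
  then show "(\<Prod>l\<in>UNIV - {k}. A $ cycle_of_list P l $ l) \<noteq> 0" by simp
qed

lemma cofactor_sign:
  fixes A :: "real^'n^'n"
  assumes E: "sign_pattern E A" and ki: "k \<noteq> i" and diag: "\<forall>l. l \<noteq> i \<longrightarrow> A $ l $ l < 0"
    and P: "is_path E i k P"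
    and no_iffl: "\<not> has_IFFL E i k"
    and no_pos: "\<not> has_pos_loop_disjoint_from_io_path E i k"
  shows "0 < (-1) ^ (CARD('n) - 1) * path_sign E P * cofactor A i k"
proof -
  define \<sigma> where "\<sigma> = (-1::real) ^ (CARD('n) - 1) * path_sign E P"
  define T where "T p = of_int (sign p) * (\<Prod>l\<in>UNIV - {k}. A $ p l $ l)" for p :: "'n \<Rightarrow> 'n"
  have nonneg: "0 \<le> \<sigma> * T p" if p: "p permutes UNIV" and pk: "p k = i" for p
  proof (cases "is_path E i k (support p i)")
    case True
    then have "\<forall>c. is_feedback_loop E c \<and> set c \<inter> set (support p i) = {}
        \<longrightarrow> cycle_sign E c \<le> 0"
      using no_pos unfolding has_pos_loop_disjoint_from_io_path_def by (meson not_le)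
    then show ?thesis
      using cofactor_term_sign[OF E p pk ki diag] path_sign_coherent[OF E no_iffl P True]
      unfolding \<sigma>_def T_def by (simp add: mult.assoc)
  next
    case False
    then have "(\<Prod>l\<in>UNIV - {k}. A $ p l $ l) = 0"
      by (rule cofactor_term_eq_0_unless_path[OF E permutes_imp_permutation[OF finite p] pk ki])
    then show ?thesis unfolding T_def by (metis mult_zero_right order_refl)
  qed
  define c where "c = cycle_of_list P"
  note c = cycle_of_list_cofactor_term[OF E P diag, folded c_def]
  have "\<sigma> \<noteq> 0" using abs_path_sign[OF E P] unfolding \<sigma>_def by auto
  then have "0 < \<sigma> * T c" using nonneg[OF c(1,2)] c(3) by (simp add: T_def order_less_le)
  then have "0 < (\<Sum>p | p permutes UNIV \<and> p k = i. \<sigma> * T p)"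
    by (intro sum_pos2[where i = c]) (use c nonneg in auto)
  then show ?thesis unfolding \<sigma>_def T_def cofactor_def by (simp add: sum_distrib_left)
qed

section \<open>Steady-state curves\<close>

definition dgctl_du :: "control \<Rightarrow> real \<Rightarrow> real \<Rightarrow> real" where
  "dgctl_du c xT x1 = (case c of Flow \<Rightarrow> 1 | Activation \<Rightarrow> xT - x1 | Inhibition \<Rightarrow> - x1)"

lemma dgctl_du_nonzero:
  assumes "c \<noteq> Flow \<longrightarrow> 0 < x1 \<and> x1 < xT"
  shows "dgctl_du c xT x1 \<noteq> 0"
  using assms by (cases c) (auto simp: dgctl_du_def)

lemma gctl_has_derivative:
  assumes "(x1 has_real_derivative d) (at u within I)"
  shows "((\<lambda>v. gctl c xT kon koff v (x1 v)) has_real_derivative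
          dgctl_du c xT (x1 u) + dgctl_dx1 c xT kon koff u * d) (at u within I)"
  using assms unfolding gctl_def dgctl_du_def dgctl_dx1_def
  by (cases c) (auto intro!: derivative_eq_intros simp: algebra_simps)

lemma axis_eq_scaleR: "axis i r = r *\<^sub>R axis i (1::real)"
  by (simp add: vec_eq_iff axis_def)

lemma Fsys_eq: "Fsys f c xT kon koff i1 x u = f x + gctl c xT kon koff u (x $ i1) *\<^sub>R axis i1 1"
  unfolding Fsys_def by (subst axis_eq_scaleR) (rule refl)

lemma DFsys_mult_vec:
  "DFsys Df c xT kon koff i1 x u *v v
    = Df x *v v + (dgctl_dx1 c xT kon koff u * v $ i1) *\<^sub>R axis i1 1"
proof -
  have "(\<chi> i k. if i = i1 \<and> k = i1 then dgctl_dx1 c xT kon koff u else 0) *v v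
      = (dgctl_dx1 c xT kon koff u * v $ i1) *\<^sub>R axis i1 1"
    by (simp add: vec_eq_iff matrix_vector_mult_def axis_def if_distrib[of "\<lambda>z. z * _"]
        cong: if_cong)
  then show ?thesis unfolding DFsys_def matrix_vector_mult_add_rdistrib by simp
qed

lemma Fsys_along_curve_has_derivative:
  assumes f_deriv: "\<forall>x\<in>X. (f has_derivative (\<lambda>h. Df x *v h)) (at x within X)"
    and xsX: "xs ` I \<subseteq> X" and u: "u \<in> I"
    and xs: "(xs has_vector_derivative v) (at u within I)"
  shows "((\<lambda>t. Fsys f c xT kon koff i1 (xs t) t) has_vector_derivative
          DFsys Df c xT kon koff i1 (xs u) u *v v + axis i1 (dgctl_du c xT (xs u $ i1)))
         (at u within I)"
proof -
  have xs': "(xs has_derivative (\<lambda>h. h *\<^sub>R v)) (at u within I)"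
    using xs by (simp add: has_vector_derivative_def)
  have "((\<lambda>t. f (xs t)) has_derivative (\<lambda>h. Df (xs u) *v (h *\<^sub>R v))) (at u within I)"
    by (rule has_derivative_in_compose2[of X f "\<lambda>x h. Df x *v h", OF _ xsX u xs'])
      (use f_deriv in auto)
  then have f_xs: "((\<lambda>t. f (xs t)) has_vector_derivative Df (xs u) *v v) (at u within I)"
    by (simp add: has_vector_derivative_def matrix_vector_mult_scaleR)
  have "((\<lambda>t. xs t $ i1) has_real_derivative v $ i1) (at u within I)"
    using bounded_linear.has_vector_derivative[OF bounded_linear_vec_nth xs, of i1]
    by (simp add: has_real_derivative_iff_has_vector_derivative)
  from gctl_has_derivative[OF this]
  have "((\<lambda>t. gctl c xT kon koff t (xs t $ i1) *\<^sub>R axis i1 1) has_vector_derivative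
      (dgctl_du c xT (xs u $ i1) + dgctl_dx1 c xT kon koff u * v $ i1) *\<^sub>R axis i1 1)
      (at u within I)"
    by (auto intro!: derivative_eq_intros)
  from has_vector_derivative_add[OF f_xs this] show ?thesis
    by (simp add: Fsys_eq DFsys_mult_vec axis_eq_scaleR[of i1 "dgctl_du c xT (xs u $ i1)"]
        scaleR_add_left algebra_simps)
qed

lemma at_within_interval_nontrivial:
  fixes I :: "real set"
  assumes "is_interval I" and "\<exists>a\<in>I. \<exists>b\<in>I. a < b" and "u \<in> I"
  shows "at u within I \<noteq> bot"
proof -
  have "u islimpt I"
  proof (rule connected_imp_perfect)
    show "connected I" using assms(1) by (rule is_interval_connected)
    show "u \<in> I" by fact
    fix x show "I \<noteq> {x}" using assms(2) by auto
  qed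
  then show ?thesis using trivial_limit_within by blast
qed

lemma ss_curve_derivative_equation:
  assumes f_deriv: "\<forall>x\<in>X. (f has_derivative (\<lambda>h. Df x *v h)) (at x within X)"
    and ss: "ss_curve (Fsys f c xT kon koff i1) (DFsys Df c xT kon koff i1) X I xs xs'"
    and u: "u \<in> I"
  shows "DFsys Df c xT kon koff i1 (xs u) u *v xs' u = axis i1 (- dgctl_du c xT (xs u $ i1))"
proof -
  note curve = ss[unfolded ss_curve_def]
  define W where
    "W = DFsys Df c xT kon koff i1 (xs u) u *v xs' u + axis i1 (dgctl_du c xT (xs u $ i1))"
  have F_deriv: "((\<lambda>t. Fsys f c xT kon koff i1 (xs t) t) has_vector_derivative W) (at u within I)"
    unfolding W_def using curve u
    by (intro Fsys_along_curve_has_derivative[OF f_deriv]) auto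
  have "((\<lambda>t. 0) has_vector_derivative W) (at u within I)"
    by (rule has_vector_derivative_transform[OF u _ F_deriv]) (use curve in auto)
  then have "W = 0"
    using vector_derivative_unique_within[OF at_within_interval_nontrivial _ has_vector_derivative_const]
      curve u
    by blast
  then have "DFsys Df c xT kon koff i1 (xs u) u *v xs' u = - axis i1 (dgctl_du c xT (xs u $ i1))"
    unfolding W_def by (simp add: eq_neg_iff_add_eq_0)
  also have "\<dots> = axis i1 (- dgctl_du c xT (xs u $ i1))"
    by (simp add: vec_eq_iff axis_def)
  finally show ?thesis .
qed

lemma ss_curve_cofactor_equation:
  assumes f_deriv: "\<forall>x\<in>X. (f has_derivative (\<lambda>h. Df x *v h)) (at x within X)"
    and ss: "ss_curve (Fsys f c xT kon koff i1) (DFsys Df c xT kon koff i1) X I xs xs'"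
    and u: "u \<in> I"
  shows "xs' u $ k * det (DFsys Df c xT kon koff i1 (xs u) u)
       = - dgctl_du c xT (xs u $ i1) * cofactor (DFsys Df c xT kon koff i1 (xs u) u) i1 k"
  using cramer_lemma[of k "DFsys Df c xT kon koff i1 (xs u) u" "xs' u"]
  unfolding ss_curve_derivative_equation[OF f_deriv ss u] det_replace_column_axis by simp

lemma ss_curve_det_nonzero:
  assumes "ss_curve F DF X I xs xs'" and "u \<in> I"
  shows "det (DF (xs u) u) \<noteq> 0"
  using assms by (simp add: ss_curve_def det_eq_0_rank)

lemma sign_pattern_DFsys:
  assumes sign_const: "\<forall>i k. (\<forall>x\<in>X. Df x $ i $ k > 0) \<or> (\<forall>x\<in>X. Df x $ i $ k < 0)
                          \<or> (\<forall>x\<in>X. Df x $ i $ k = 0)"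
    and x: "x \<in> X"
  shows "sign_pattern (edge_sign Df X) (DFsys Df c xT kon koff i1 x u)"
  unfolding sign_pattern_def
proof (intro allI impI)
  fix a b :: 'a assume "a \<noteq> b"
  then have entry: "DFsys Df c xT kon koff i1 x u $ b $ a = Df x $ b $ a"
    by (auto simp: DFsys_def)
  from sign_const[rule_format, of b a] x
  show "edge_sign Df X a b = sgn (DFsys Df c xT kon koff i1 x u $ b $ a)"
    unfolding entry edge_sign_def by (elim disjE) (force simp: sgn_if)+
qed

lemma ss_curve_component_constant:
  assumes ss: "ss_curve F DF X I xs xs'" and zero: "\<forall>u\<in>I. xs' u $ j = 0"
    and u: "u \<in> I" and v: "v \<in> I"
  shows "xs u $ j = xs v $ j"
proof -
  note curve = ss[unfolded ss_curve_def]
  have "\<exists>a. \<forall>t\<in>I. xs t $ j = a"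
  proof (rule has_derivative_zero_constant)
    show "convex I" using curve is_interval_convex by blast
    fix t assume t: "t \<in> I"
    have "(xs has_derivative (\<lambda>h. h *\<^sub>R xs' t)) (at t within I)"
      using curve t by (auto simp: has_vector_derivative_def)
    from bounded_linear.has_derivative[OF bounded_linear_vec_nth this, of j]
    show "((\<lambda>t. xs t $ j) has_derivative (\<lambda>h. 0)) (at t within I)" using zero t by simp
  qed
  then show ?thesis using u v by auto
qed

lemma continuous_nonvanishing_same_sign:
  fixes d :: "real \<Rightarrow> real"
  assumes "connected I" and "continuous_on I d" and nz: "\<forall>u\<in>I. d u \<noteq> 0"
    and u1: "u1 \<in> I" and u2: "u2 \<in> I"
  shows "0 < d u1 * d u2"
proof (rule ccontr)
  assume "\<not> 0 < d u1 * d u2"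
  then have between: "min (d u1) (d u2) \<le> 0 \<and> 0 \<le> max (d u1) (d u2)"
    by (auto simp: zero_less_mult_iff not_less)
  have "is_interval (d ` I)"
    using connected_continuous_image[OF assms(2,1)] is_interval_connected_1 by blast
  moreover have "min (d u1) (d u2) \<in> d ` I" "max (d u1) (d u2) \<in> d ` I"
    using u1 u2 by (auto simp: min_def max_def)
  ultimately have "0 \<in> d ` I" using between unfolding is_interval_1 by blast
  then show False using nz by auto
qed

lemma ss_curve_not_quasi_adaptive_not_biphasic:
  assumes ss: "ss_curve F DF X I xs xs'" and nz: "\<forall>u\<in>I. xs' u $ j \<noteq> 0"
  shows "\<not> quasi_adaptive_on I xs' j" and "\<not> biphasic_on I xs' j"
proof -
  note curve = ss[unfolded ss_curve_def]
  have "0 < xs' u1 $ j * xs' u2 $ j" if "u1 \<in> I" "u2 \<in> I" for u1 u2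
  proof (rule continuous_nonvanishing_same_sign[OF _ _ nz that])
    show "connected I" using curve is_interval_connected by blast
    show "continuous_on I (\<lambda>u. xs' u $ j)" using curve by (intro continuous_on_component) blast
  qed
  then show "\<not> quasi_adaptive_on I xs' j" "\<not> biphasic_on I xs' j"
    unfolding quasi_adaptive_on_def biphasic_on_def using nz by (meson not_less_iff_gr_or_eq)+
qed

theorem theorem11:
  fixes f :: "real^'n \<Rightarrow> real^'n" and Df :: "real^'n \<Rightarrow> real^'n^'n"
    and X :: "(real^'n) set" and J :: "real set"
    and c :: control and xT kon koff :: real and i1 j :: 'n
  assumes J_interval: "is_interval J" "\<exists>a\<in>J. \<exists>b\<in>J. a < b"
    and f_deriv: "\<forall>x\<in>X. (f has_derivative (\<lambda>h. Df x *v h)) (at x within X)"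
    and Df_cont: "continuous_on X Df"
    and sign_const: "\<forall>i k. (\<forall>x\<in>X. Df x $ i $ k > 0) \<or> (\<forall>x\<in>X. Df x $ i $ k < 0)
                          \<or> (\<forall>x\<in>X. Df x $ i $ k = 0)"
    and diag_neg: "\<forall>i. \<forall>x\<in>X. Df x $ i $ i < 0"
    and ctl: "c \<noteq> Flow \<longrightarrow>
               (0 < xT \<and> 0 < kon \<and> 0 < koff
                \<and> (\<forall>x\<in>X. 0 \<le> x $ i1 \<and> x $ i1 \<le> xT)
                \<and> (\<forall>u\<in>J. \<forall>x\<in>X. Fsys f c xT kon koff i1 x u = 0 \<longrightarrow> 0 < x $ i1 \<and> x $ i1 < xT))"
    and A0: "\<forall>u0\<in>J. \<exists>x0\<in>X. Fsys f c xT kon koff i1 x0 u0 = 0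
                              \<and> rank (DFsys Df c xT kon koff i1 x0 u0) = CARD('n)"
    and j_ne: "j \<noteq> i1"
  shows
    "(\<not> has_io_path (edge_sign Df X) i1 j \<longrightarrow>
        (\<forall>I xs xs'. I \<subseteq> J \<longrightarrow>
            ss_curve (Fsys f c xT kon koff i1) (DFsys Df c xT kon koff i1) X I xs xs' \<longrightarrow>
            (\<forall>u\<in>I. \<forall>v\<in>I. xs u $ j = xs v $ j)))
     \<and>
     (has_io_path (edge_sign Df X) i1 j
        \<and> \<not> has_IFFL (edge_sign Df X) i1 j
        \<and> \<not> has_pos_loop_disjoint_from_io_path (edge_sign Df X) i1 j \<longrightarrow>
        (\<forall>I xs xs'. I \<subseteq> J \<longrightarrow>
            ss_curve (Fsys f c xT kon koff i1) (DFsys Df c xT kon koff i1) X I xs xs' \<longrightarrow>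
            \<not> quasi_adaptive_on I xs' j \<and> \<not> biphasic_on I xs' j))"
proof -
  \<comment> \<open>A0 only guarantees that steady-state curves exist.\<close>
  have along_curve: "xs u \<in> X \<and> Fsys f c xT kon koff i1 (xs u) u = 0
      \<and> sign_pattern (edge_sign Df X) (DFsys Df c xT kon koff i1 (xs u) u)
      \<and> (\<forall>l. l \<noteq> i1 \<longrightarrow> DFsys Df c xT kon koff i1 (xs u) u $ l $ l < 0)"
    if "ss_curve (Fsys f c xT kon koff i1) (DFsys Df c xT kon koff i1) X I xs xs'" "u \<in> I"
    for I xs xs' u
    using that sign_pattern_DFsys[OF sign_const] diag_neg by (auto simp: ss_curve_def DFsys_def)
  show ?thesis
  proof (intro conjI impI allI)
    fix I xs xs'
    assume no_path: "\<not> has_io_path (edge_sign Df X) i1 j"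
      and ss: "ss_curve (Fsys f c xT kon koff i1) (DFsys Df c xT kon koff i1) X I xs xs'"
    have "xs' u $ j = 0" if u: "u \<in> I" for u
      using cofactor_eq_0_if_no_io_path[OF _ j_ne no_path] along_curve[OF ss u]
        ss_curve_cofactor_equation[OF f_deriv ss u, of j] ss_curve_det_nonzero[OF ss u] by simp
    then show "\<forall>u\<in>I. \<forall>v\<in>I. xs u $ j = xs v $ j" using ss_curve_component_constant[OF ss] by blast
  next
    fix I xs xs'
    assume graph: "has_io_path (edge_sign Df X) i1 j \<and> \<not> has_IFFL (edge_sign Df X) i1 j
        \<and> \<not> has_pos_loop_disjoint_from_io_path (edge_sign Df X) i1 j"
      and IJ: "I \<subseteq> J"
      and ss: "ss_curve (Fsys f c xT kon koff i1) (DFsys Df c xT kon koff i1) X I xs xs'"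
    obtain P where P: "is_path (edge_sign Df X) i1 j P" using graph unfolding has_io_path_def by blast
    have "xs' u $ j \<noteq> 0" if u: "u \<in> I" for u
    proof -
      have "cofactor (DFsys Df c xT kon koff i1 (xs u) u) i1 j \<noteq> 0"
        using cofactor_sign[OF _ j_ne _ P] along_curve[OF ss u] graph by fastforce
      moreover have "dgctl_du c xT (xs u $ i1) \<noteq> 0"
        using ctl IJ u along_curve[OF ss u] by (intro dgctl_du_nonzero) blast
      ultimately show ?thesis using ss_curve_cofactor_equation[OF f_deriv ss u, of j] by auto
    qed
    then show "\<not> quasi_adaptive_on I xs' j" "\<not> biphasic_on I xs' j"
      using ss_curve_not_quasi_adaptive_not_biphasic[OF ss] by blast+
  qed
qed

end
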